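(* Let $\rho_{AB}$ be a two-qubit Bell diagonal state, i.e. $\rho_{AB}=p_0|\phi^+\rangle\langle\phi^+|+p_1|\psi^+\rangle\langle\psi^+|+p_2|\psi^-\rangle\langle\psi^-|+p_3|\phi^-\rangle\langle\phi^-|$ with $(p_0,\dots,p_3)$ a probability vector, where $|\phi^\pm\rangle=(|00\rangle\pm|11\rangle)/\sqrt2$, $|\psi^\pm\rangle=(|01\rangle\pm|10\rangle)/\sqrt2$. Let $R_{\mu\nu}=\operatorname{Tr}[(\sigma_\mu\otimes\sigma_\nu)\rho_{AB}]$ and let $\lambda_1\le\lambda_2\le\lambda_3$ be $|R_{11}|,|R_{22}|,|R_{33}|$ in nondecreasing order. Then the two-sided (total) negativity of quantumness of $\rho_{AB}$ is $Q^{AB}_{\mathcal N}(\rho_{AB})=\lambda_2/2$.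
   Context: $\sigma_0=\mathbb I,\sigma_1=\sigma_x,\sigma_2=\sigma_y,\sigma_3=\sigma_z$. The negativity of a bipartite state $\tau_{X:Y}$ is $\mathcal N_{X:Y}(\tau)=(\|\tau^\Gamma\|_1-1)/2$, with $\tau^\Gamma$ the partial transpose on one party and $\|\cdot\|_1$ the trace norm. For a system $S$ of dimension $m$ with orthonormal basis $\{|s_k\rangle\}$, the measurement interaction is the isometry $V_S:S\to S\otimes S'$, $S'$ an $m$-dimensional system with computational basis $\{|k\rangle\}$, with $V_S|s_k\rangle=|s_k\rangle|k\rangle$. The two-sided negativity of quantumness is $Q^{AB}_{\mathcal N}(\rho_{AB})=\min \mathcal N_{AB:A'B'}\big((V_A\otimes V_B)\rho_{AB}(V_A\otimes V_B)^\dagger\big)$, minimized over all choices of orthonormal bases of $A$ and of $B$. *)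

theory Defs
  imports "Jordan_Normal_Form.Schur_Decomposition" "Jordan_Normal_Form.Char_Poly"
begin

(* Kronecker (tensor) product; index convention i = i_A * dim_B + i_B *)
definition kron :: "complex mat \<Rightarrow> complex mat \<Rightarrow> complex mat" where
  "kron A B = mat (dim_row A * dim_row B) (dim_col A * dim_col B)
     (\<lambda>(i,j). A $$ (i div dim_row B, j div dim_col B) * B $$ (i mod dim_row B, j mod dim_col B))"

definition ketbra :: "complex vec \<Rightarrow> complex vec \<Rightarrow> complex mat" where
  "ketbra v w = mat (dim_vec v) (dim_vec w) (\<lambda>(i,j). v $ i * cnj (w $ j))"

definition trace_norm :: "complex mat \<Rightarrow> real" where
  "trace_norm X = sum_mset (image_mset (\<lambda>x. sqrt (Re x)) (proots (char_poly (mat_adjoint X * X))))"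

(* computational basis of C^2: index 0 = |0>, 1 = |1>; two qubits: index 2a+b = |ab> *)
definition bell_phi_plus :: "complex vec" where
  "bell_phi_plus = vec_of_list [1/sqrt 2, 0, 0, 1/sqrt 2]"
definition bell_phi_minus :: "complex vec" where
  "bell_phi_minus = vec_of_list [1/sqrt 2, 0, 0, - 1/sqrt 2]"
definition bell_psi_plus :: "complex vec" where
  "bell_psi_plus = vec_of_list [0, 1/sqrt 2, 1/sqrt 2, 0]"
definition bell_psi_minus :: "complex vec" where
  "bell_psi_minus = vec_of_list [0, 1/sqrt 2, - 1/sqrt 2, 0]"

definition bell_diag :: "(nat \<Rightarrow> real) \<Rightarrow> complex mat" where
  "bell_diag p =
      complex_of_real (p 0) \<cdot>\<^sub>m ketbra bell_phi_plus bell_phi_plus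
    + complex_of_real (p 1) \<cdot>\<^sub>m ketbra bell_psi_plus bell_psi_plus
    + complex_of_real (p 2) \<cdot>\<^sub>m ketbra bell_psi_minus bell_psi_minus
    + complex_of_real (p 3) \<cdot>\<^sub>m ketbra bell_phi_minus bell_phi_minus"

definition pauli :: "nat \<Rightarrow> complex mat" where
  "pauli k = (if k = 0 then mat_of_rows_list 2 [[1,0],[0,1]]
         else if k = 1 then mat_of_rows_list 2 [[0,1],[1,0]]
         else if k = 2 then mat_of_rows_list 2 [[0,-\<i>],[\<i>,0]]
         else mat_of_rows_list 2 [[1,0],[0,-1]])"

definition mtrace :: "complex mat \<Rightarrow> complex" where
  "mtrace A = (\<Sum>i<dim_row A. A $$ (i,i))"

definition corr :: "complex mat \<Rightarrow> nat \<Rightarrow> nat \<Rightarrow> complex" where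
  "corr \<rho> \<mu> \<nu> = mtrace (kron (pauli \<mu>) (pauli \<nu>) * \<rho>)"

definition onb :: "nat \<Rightarrow> (nat \<Rightarrow> complex vec) \<Rightarrow> bool" where
  "onb m s \<longleftrightarrow> (\<forall>k<m. s k \<in> carrier_vec m) \<and>
     (\<forall>j<m. \<forall>k<m. s j \<bullet>c s k = (if j = k then 1 else 0))"

(* measurement isometry V_S : S \<rightarrow> S \<otimes> S', V_S |s_k> = |s_k>|k>,
   i.e. V_S = sum_k (|s_k> \<otimes> |k>) <s_k|; index of S \<otimes> S' is i_S * m + k *)
definition meas_iso :: "nat \<Rightarrow> (nat \<Rightarrow> complex vec) \<Rightarrow> complex mat" where
  "meas_iso m s = mat (m * m) m
     (\<lambda>(i,j). \<Sum>k<m. (s k $ (i div m)) * (if i mod m = k then 1 else 0) * cnj (s k $ j))"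

(* state on A A' B B' (in this tensor order, each factor a qubit) *)
definition measured_state :: "(nat \<Rightarrow> complex vec) \<Rightarrow> (nat \<Rightarrow> complex vec) \<Rightarrow> complex mat \<Rightarrow> complex mat" where
  "measured_state sA sB \<rho> =
     (let W = kron (meas_iso 2 sA) (meas_iso 2 sB) in W * \<rho> * mat_adjoint W)"

(* partial transpose on the party A'B' of a 16x16 matrix on A A' B B',
   index i = 8 a + 4 a' + 2 b + b' *)
definition pt_ApBp :: "complex mat \<Rightarrow> complex mat" where
  "pt_ApBp \<tau> = mat 16 16 (\<lambda>(i,j).
     let a = i div 8; a' = (i div 4) mod 2; b = (i div 2) mod 2; b' = i mod 2;
         c = j div 8; c' = (j div 4) mod 2; d = (j div 2) mod 2; d' = j mod 2
     in \<tau> $$ (8*a + 4*c' + 2*b + d', 8*c + 4*a' + 2*d + b'))"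

definition negativity_AB_ApBp :: "complex mat \<Rightarrow> real" where
  "negativity_AB_ApBp \<tau> = (trace_norm (pt_ApBp \<tau>) - 1) / 2"

definition QN_AB :: "complex mat \<Rightarrow> real" where
  "QN_AB \<rho> = Inf {negativity_AB_ApBp (measured_state sA sB \<rho>) | sA sB. onb 2 sA \<and> onb 2 sB}"

end

theory Submission
  imports Defs
begin

text \<open>Let \<open>\<rho>'\<close> be the matrix of \<open>\<rho>\<close> in the product basis \<open>sA a \<otimes> sB b\<close>. The partial transpose
  \<open>X\<close> of the measured state has entries \<open>X(xy, x'y') = \<langle>x|s\<^sub>y\<^sub>'\<rangle> \<rho>'\<^sub>y\<^sub>'\<^sub>y \<langle>s\<^sub>y|x'\<rangle>\<close>, so
  \<open>X\<^sup>\<dagger>X\<close> is unitarily similar to the diagonal matrix of the \<open>\<bar>\<rho>'\<^sub>y\<^sub>x\<bar>\<^sup>2\<close>, and the negativity is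
  \<open>(\<Sum>\<bar>\<rho>'\<^sub>y\<^sub>x\<bar> - 1) / 2\<close>. The diagonal of \<open>\<rho>'\<close> contributes at least \<open>\<bar>tr \<rho>\<bar> = 1\<close>. For a Bell
  diagonal state, each of the two blocks of \<open>\<rho>'\<close> whose \<open>B\<close>-labels differ is a unitary conjugate of
  a \<open>2\<times>2\<close> matrix \<open>K\<close> with \<open>\<parallel>K\<parallel>\<^sub>F\<^sup>2 + 2\<bar>det K\<bar> \<ge> \<lambda>\<^sub>2\<^sup>2/4\<close>. This quantity is unitarily
  invariant and at most \<open>(\<Sum>\<bar>K\<^sub>i\<^sub>j\<bar>)\<^sup>2\<close>, so each block adds at least \<open>\<lambda>\<^sub>2/2\<close>. Measuring both qubits in the eigenbasis of the \<open>\<sigma>\<^sub>k\<close> with the largest \<open>\<bar>R\<^sub>k\<^sub>k\<bar>\<close>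
  attains the bound.\<close>

section \<open>Bell diagonal states in the computational basis\<close>

lemma nat_less_4_iff: "(i::nat) < 4 \<longleftrightarrow> i = 0 \<or> i = 1 \<or> i = 2 \<or> i = 3"
  by auto

lemma nat_less_2_iff: "(i::nat) < 2 \<longleftrightarrow> i = 0 \<or> i = 1"
  by auto

lemma sum_lessThan_4: "(\<Sum>i<(4::nat). f i) = f 0 + f 1 + f 2 + (f 3 :: 'a::comm_monoid_add)"
  by (simp add: numeral_eq_Suc add.assoc)

lemma sum_lessThan_2: "(\<Sum>i<(2::nat). f i) = f 0 + (f 1 :: 'a::comm_monoid_add)"
  by (simp add: numeral_eq_Suc)

definition inv_sqrt2 :: real where
  "inv_sqrt2 = 1 / sqrt 2"

lemma inv_sqrt2_sq: "complex_of_real inv_sqrt2 * complex_of_real inv_sqrt2 = 1/2"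
proof -
  have "inv_sqrt2 * inv_sqrt2 = 1/2"
    unfolding inv_sqrt2_def by (simp add: divide_simps)
  then show ?thesis
    by (metis of_real_divide of_real_mult of_real_1 of_real_numeral)
qed

lemma inv_sqrt2_sq_mult: "complex_of_real inv_sqrt2 * (complex_of_real inv_sqrt2 * z) = z / 2"
  by (simp add: mult.assoc[symmetric] inv_sqrt2_sq)

lemma bell_vec_index:
  "bell_phi_plus $ 0 = inv_sqrt2" "bell_phi_plus $ 1 = 0" "bell_phi_plus $ 2 = 0" "bell_phi_plus $ 3 = inv_sqrt2"
  "bell_phi_minus $ 0 = inv_sqrt2" "bell_phi_minus $ 1 = 0" "bell_phi_minus $ 2 = 0" "bell_phi_minus $ 3 = - inv_sqrt2"
  "bell_psi_plus $ 0 = 0" "bell_psi_plus $ 1 = inv_sqrt2" "bell_psi_plus $ 2 = inv_sqrt2" "bell_psi_plus $ 3 = 0"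
  "bell_psi_minus $ 0 = 0" "bell_psi_minus $ 1 = inv_sqrt2" "bell_psi_minus $ 2 = - inv_sqrt2" "bell_psi_minus $ 3 = 0"
  by (simp_all add: bell_phi_plus_def bell_phi_minus_def bell_psi_plus_def bell_psi_minus_def
      vec_of_list_index numeral_eq_Suc inv_sqrt2_def del: vec_of_list_Cons vec_of_list_map)

lemma dim_bell_vec:
  "dim_vec bell_phi_plus = 4" "dim_vec bell_phi_minus = 4" "dim_vec bell_psi_plus = 4" "dim_vec bell_psi_minus = 4"
  by (simp_all add: bell_phi_plus_def bell_phi_minus_def bell_psi_plus_def bell_psi_minus_def)

definition bell_diag_entry :: "(nat \<Rightarrow> real) \<Rightarrow> nat \<Rightarrow> nat \<Rightarrow> real" where
  "bell_diag_entry p i j =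
     (if i = j then (if i = 0 \<or> i = 3 then (p 0 + p 3)/2 else (p 1 + p 2)/2)
      else if (i = 0 \<and> j = 3) \<or> (i = 3 \<and> j = 0) then (p 0 - p 3)/2
      else if (i = 1 \<and> j = 2) \<or> (i = 2 \<and> j = 1) then (p 1 - p 2)/2 else 0)"

lemma bell_diag_carrier: "bell_diag p \<in> carrier_mat 4 4"
  unfolding bell_diag_def ketbra_def by (auto simp: dim_bell_vec)

lemma bell_diag_index:
  assumes "i < 4" "j < 4"
  shows "bell_diag p $$ (i,j) = complex_of_real (bell_diag_entry p i j)"
proof -
  have "bell_diag p $$ (i,j) =
      complex_of_real (p 0) * (bell_phi_plus $ i * cnj (bell_phi_plus $ j))
    + complex_of_real (p 1) * (bell_psi_plus $ i * cnj (bell_psi_plus $ j))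
    + complex_of_real (p 2) * (bell_psi_minus $ i * cnj (bell_psi_minus $ j))
    + complex_of_real (p 3) * (bell_phi_minus $ i * cnj (bell_phi_minus $ j))"
    using assms unfolding bell_diag_def by (simp add: dim_bell_vec ketbra_def)
  then show ?thesis
    using assms unfolding nat_less_4_iff
    by (elim disjE) (simp_all add: bell_vec_index bell_vec_index[unfolded One_nat_def]
        bell_diag_entry_def inv_sqrt2_sq field_simps)
qed

lemma kron_index:
  "i < dim_row A * dim_row B \<Longrightarrow> j < dim_col A * dim_col B \<Longrightarrow>
   kron A B $$ (i,j) = A $$ (i div dim_row B, j div dim_col B) * B $$ (i mod dim_row B, j mod dim_col B)"
  unfolding kron_def by simp

lemma dim_kron [simp]:
  "dim_row (kron A B) = dim_row A * dim_row B" "dim_col (kron A B) = dim_col A * dim_col B"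
  unfolding kron_def by simp_all

lemma dim_pauli [simp]: "dim_row (pauli k) = 2" "dim_col (pauli k) = 2"
  unfolding pauli_def mat_of_rows_list_def by auto

lemma pauli_index:
  "pauli 1 $$ (0,0) = 0" "pauli 1 $$ (0,1) = 1" "pauli 1 $$ (1,0) = 1" "pauli 1 $$ (1,1) = 0"
  "pauli 2 $$ (0,0) = 0" "pauli 2 $$ (0,1) = -\<i>" "pauli 2 $$ (1,0) = \<i>" "pauli 2 $$ (1,1) = 0"
  "pauli 3 $$ (0,0) = 1" "pauli 3 $$ (0,1) = 0" "pauli 3 $$ (1,0) = 0" "pauli 3 $$ (1,1) = -1"
  by (simp_all add: pauli_def mat_of_rows_list_def)

lemma corr_eq_sum:
  assumes "\<rho> \<in> carrier_mat 4 4"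
  shows "corr \<rho> m n =
    (\<Sum>i<4. \<Sum>k<4. pauli m $$ (i div 2, k div 2) * pauli n $$ (i mod 2, k mod 2) * \<rho> $$ (k, i))"
proof -
  have "corr \<rho> m n = (\<Sum>i<4. (kron (pauli m) (pauli n) * \<rho>) $$ (i,i))"
    unfolding corr_def mtrace_def by simp
  also have "\<dots> = (\<Sum>i<4. \<Sum>k<4. kron (pauli m) (pauli n) $$ (i,k) * \<rho> $$ (k, i))"
    using assms by (intro sum.cong refl) (auto simp: scalar_prod_def atLeast0LessThan)
  finally show ?thesis
    by (simp add: kron_index)
qed

lemma corr_bell_diag:
  "corr (bell_diag p) 1 1 = complex_of_real (p 0 + p 1 - p 2 - p 3)"
  "corr (bell_diag p) 2 2 = complex_of_real (- p 0 + p 1 - p 2 + p 3)"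
  "corr (bell_diag p) 3 3 = complex_of_real (p 0 - p 1 - p 2 + p 3)"
  by (simp_all add: corr_eq_sum[OF bell_diag_carrier] sum_lessThan_4 bell_diag_index
      bell_diag_entry_def pauli_index pauli_index[unfolded One_nat_def] field_simps)

section \<open>The partial transpose of a measured two-qubit state\<close>

lemma onb_carrier: "onb m s \<Longrightarrow> k < m \<Longrightarrow> s k \<in> carrier_vec m"
  unfolding onb_def by auto

lemma onb_inner_cnj:
  assumes "onb m s" "j < m" "k < m"
  shows "(\<Sum>i<m. cnj (s j $ i) * s k $ i) = (if j = k then 1 else 0)"
proof -
  have "s j \<bullet>c s k = (\<Sum>i<m. s j $ i * cnj (s k $ i))"
    using onb_carrier[OF assms(1,3)] by (simp add: scalar_prod_def atLeast0LessThan)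
  moreover have "s j \<bullet>c s k = (if j = k then 1 else 0)"
    using assms unfolding onb_def by auto
  ultimately have "(\<Sum>i<m. s j $ i * cnj (s k $ i)) = (if j = k then 1 else 0)"
    by simp
  then have "cnj (\<Sum>i<m. s j $ i * cnj (s k $ i)) = (if j = k then 1 else 0)"
    by simp
  then show ?thesis
    by (simp add: ac_simps)
qed

text \<open>The coordinate matrix of an orthonormal basis has a left inverse, hence a right one:
  its rows are orthonormal as well.\<close>

lemma onb_rows_orthonormal:
  assumes "onb m s" "r < m" "r' < m"
  shows "(\<Sum>a<m. s a $ r * cnj (s a $ r')) = (if r = r' then 1 else 0)"
proof -
  define M where "M = mat m m (\<lambda>(r,a). s a $ r)"
  define Mh where "Mh = mat m m (\<lambda>(a,r). cnj (s a $ r))"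
  have M: "M \<in> carrier_mat m m" and Mh: "Mh \<in> carrier_mat m m"
    unfolding M_def Mh_def by auto
  have "Mh * M = 1\<^sub>m m"
  proof (rule eq_matI)
    fix i j assume "i < dim_row (1\<^sub>m m :: complex mat)" "j < dim_col (1\<^sub>m m :: complex mat)"
    then have ij: "i < m" "j < m" by auto
    then have "(Mh * M) $$ (i,j) = (\<Sum>r<m. cnj (s i $ r) * s j $ r)"
      unfolding M_def Mh_def by (simp add: scalar_prod_def atLeast0LessThan)
    then show "(Mh * M) $$ (i,j) = 1\<^sub>m m $$ (i,j)"
      using onb_inner_cnj[OF assms(1) ij] ij by simp
  qed (use M Mh in auto)
  then have "M * Mh = 1\<^sub>m m"
    by (rule mat_mult_left_right_inverse[OF Mh M])
  moreover have "(M * Mh) $$ (r,r') = (\<Sum>a<m. s a $ r * cnj (s a $ r'))"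
    using assms unfolding M_def Mh_def by (simp add: scalar_prod_def atLeast0LessThan)
  ultimately show ?thesis
    using assms by simp
qed

text \<open>The index \<open>8a + 4a' + 2b + b'\<close> of \<open>A A' B B'\<close> is split into the system label
  \<open>x = 2a + b\<close> of \<open>AB\<close> and the ancilla label \<open>y = 2a' + b'\<close> of \<open>A'B'\<close>.\<close>

definition joint_index :: "nat \<Rightarrow> nat \<Rightarrow> nat" where
  "joint_index x y = 8*(x div 2) + 4*(y div 2) + 2*(x mod 2) + y mod 2"

definition sys_label :: "nat \<Rightarrow> nat" where
  "sys_label i = 2*(i div 8) + (i div 2) mod 2"

definition anc_label :: "nat \<Rightarrow> nat" where
  "anc_label i = 2*((i div 4) mod 2) + i mod 2"

lemma joint_index_props:
  assumes "x < 4" "y < 4"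
  shows "joint_index x y < 16" "sys_label (joint_index x y) = x" "anc_label (joint_index x y) = y"
    "joint_index x y div 8 = x div 2" "(joint_index x y div 4) mod 2 = y div 2"
    "(joint_index x y div 2) mod 2 = x mod 2" "joint_index x y mod 2 = y mod 2"
    "joint_index x y div 4 = 2 * (x div 2) + y div 2" "joint_index x y mod 4 = 2 * (x mod 2) + y mod 2"
  using assms unfolding nat_less_4_iff by (auto simp: joint_index_def sys_label_def anc_label_def)

lemma joint_index_labels:
  assumes "i < 16"
  shows "sys_label i < 4" "anc_label i < 4" "joint_index (sys_label i) (anc_label i) = i"
proof -
  have "i \<in> {0,1,2,3,4,5,6,7,8,9,10,11,12,13,14,15}"
    using assms by (auto simp: numeral_eq_Suc less_Suc_eq)
  then show "sys_label i < 4" "anc_label i < 4" "joint_index (sys_label i) (anc_label i) = i"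
    by (auto simp: joint_index_def sys_label_def anc_label_def)
qed

lemma joint_index_eq_iff:
  "x < 4 \<Longrightarrow> y < 4 \<Longrightarrow> x' < 4 \<Longrightarrow> y' < 4 \<Longrightarrow> joint_index x y = joint_index x' y' \<longleftrightarrow> x = x' \<and> y = y'"
  by (metis joint_index_props(2,3))

lemma sum_lessThan_16: "(\<Sum>i<16. f i) = (\<Sum>x<4. \<Sum>y<4. f (joint_index x y))"
proof -
  have "(\<Sum>i<16. f i) = (\<Sum>(x,y)\<in>{..<4}\<times>{..<4}. f (joint_index x y))"
    by (rule sum.reindex_bij_witness[where i="\<lambda>(x,y). joint_index x y" and j="\<lambda>i. (sys_label i, anc_label i)"])
       (auto simp: joint_index_labels joint_index_props)
  then show ?thesis
    by (simp add: sum.cartesian_product)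
qed

text \<open>\<open>prod_basis_coord sA sB r x\<close> is the \<open>r\<close>-th coordinate of the product basis vector
  \<open>sA (x div 2) \<otimes> sB (x mod 2)\<close>, and \<open>rho_in_basis\<close> is the matrix of \<open>\<rho>\<close> in this basis.\<close>

definition prod_basis_coord :: "(nat \<Rightarrow> complex vec) \<Rightarrow> (nat \<Rightarrow> complex vec) \<Rightarrow> nat \<Rightarrow> nat \<Rightarrow> complex" where
  "prod_basis_coord sA sB r x = sA (x div 2) $ (r div 2) * sB (x mod 2) $ (r mod 2)"

definition rho_in_basis ::
  "(nat \<Rightarrow> complex vec) \<Rightarrow> (nat \<Rightarrow> complex vec) \<Rightarrow> complex mat \<Rightarrow> nat \<Rightarrow> nat \<Rightarrow> complex" where
  "rho_in_basis sA sB \<rho> x y =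
     (\<Sum>u<4. \<Sum>v<4. cnj (prod_basis_coord sA sB u x) * \<rho> $$ (u,v) * prod_basis_coord sA sB v y)"

lemma eq_iff_div_mod_2: "(y::nat) = y' \<longleftrightarrow> y div 2 = y' div 2 \<and> y mod 2 = y' mod 2"
  by (metis div_mult_mod_eq)

lemma prod_basis_coord_cols:
  assumes A: "onb 2 sA" and B: "onb 2 sB" and "y < 4" "y' < 4"
  shows "(\<Sum>x<4. cnj (prod_basis_coord sA sB x y) * prod_basis_coord sA sB x y') = (if y = y' then 1 else 0)"
proof -
  have "y div 2 < 2" "y' div 2 < 2" "y mod 2 < 2" "y' mod 2 < 2"
    using assms by auto
  moreover have "(\<Sum>x<4. cnj (prod_basis_coord sA sB x y) * prod_basis_coord sA sB x y') =
    (\<Sum>a<2. cnj (sA (y div 2) $ a) * sA (y' div 2) $ a) * (\<Sum>b<2. cnj (sB (y mod 2) $ b) * sB (y' mod 2) $ b)"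
    by (simp add: sum_lessThan_4 sum_lessThan_2 prod_basis_coord_def algebra_simps)
  ultimately show ?thesis
    using onb_inner_cnj[OF A] onb_inner_cnj[OF B] by (auto simp: eq_iff_div_mod_2[of y y'])
qed

lemma prod_basis_coord_rows:
  assumes A: "onb 2 sA" and B: "onb 2 sB" and "x < 4" "x' < 4"
  shows "(\<Sum>y<4. prod_basis_coord sA sB x y * cnj (prod_basis_coord sA sB x' y)) = (if x = x' then 1 else 0)"
proof -
  have "x div 2 < 2" "x' div 2 < 2" "x mod 2 < 2" "x' mod 2 < 2"
    using assms by auto
  moreover have "(\<Sum>y<4. prod_basis_coord sA sB x y * cnj (prod_basis_coord sA sB x' y)) =
    (\<Sum>a<2. sA a $ (x div 2) * cnj (sA a $ (x' div 2))) * (\<Sum>b<2. sB b $ (x mod 2) * cnj (sB b $ (x' mod 2)))"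
    by (simp add: sum_lessThan_4 sum_lessThan_2 prod_basis_coord_def algebra_simps)
  ultimately show ?thesis
    using onb_rows_orthonormal[OF A] onb_rows_orthonormal[OF B] by (auto simp: eq_iff_div_mod_2[of x x'])
qed

lemma dim_mat_adjoint [simp]: "dim_row (mat_adjoint A) = dim_col A" "dim_col (mat_adjoint A) = dim_row A"
  unfolding mat_adjoint_def by auto

lemma mat_adjoint_index: "i < dim_col A \<Longrightarrow> j < dim_row A \<Longrightarrow> mat_adjoint A $$ (i,j) = cnj (A $$ (j,i))"
  unfolding mat_adjoint_def by (simp add: mat_of_rows_index)

lemma dim_meas_iso [simp]: "dim_row (meas_iso m s) = m * m" "dim_col (meas_iso m s) = m"
  unfolding meas_iso_def by auto

lemma meas_iso_index:
  "r < 4 \<Longrightarrow> j < 2 \<Longrightarrow> meas_iso 2 s $$ (r,j) = s (r mod 2) $ (r div 2) * cnj (s (r mod 2) $ j)"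
  unfolding meas_iso_def by (auto simp: sum_lessThan_2 nat_less_2_iff[of "r mod 2", simplified])

lemma kron_meas_iso_index:
  assumes "x < 4" "z < 4" "u < 4"
  shows "kron (meas_iso 2 sA) (meas_iso 2 sB) $$ (joint_index x z, u) =
    prod_basis_coord sA sB x z * cnj (prod_basis_coord sA sB u z)"
proof -
  have "kron (meas_iso 2 sA) (meas_iso 2 sB) $$ (joint_index x z, u) =
     meas_iso 2 sA $$ (joint_index x z div 4, u div 2) * meas_iso 2 sB $$ (joint_index x z mod 4, u mod 2)"
    using assms joint_index_props[OF assms(1,2)] by (simp add: kron_index)
  also have "\<dots> = prod_basis_coord sA sB x z * cnj (prod_basis_coord sA sB u z)"
    using assms unfolding nat_less_4_iff by (auto simp: meas_iso_index joint_index_def prod_basis_coord_def)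
  finally show ?thesis .
qed

lemma mult3_index:
  assumes "A \<in> carrier_mat n m" "B \<in> carrier_mat m l" "C \<in> carrier_mat l q" "i < n" "j < q"
  shows "(A * B * C) $$ (i,j) = (\<Sum>k<l. (\<Sum>u<m. A $$ (i,u) * B $$ (u,k)) * C $$ (k,j))"
  using assms by (simp add: scalar_prod_def atLeast0LessThan del: assoc_mult_mat)

lemma measured_state_index:
  assumes "x < 4" "z < 4" "x' < 4" "z' < 4" and rho: "\<rho> \<in> carrier_mat 4 4"
  shows "measured_state sA sB \<rho> $$ (joint_index x z, joint_index x' z') =
    prod_basis_coord sA sB x z * rho_in_basis sA sB \<rho> z z' * cnj (prod_basis_coord sA sB x' z')"
proof -
  let ?W = "kron (meas_iso 2 sA) (meas_iso 2 sB)" and ?S = "prod_basis_coord sA sB"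
  have i: "joint_index x z < 16" "joint_index x' z' < 16"
    using joint_index_props assms by auto
  have W: "?W \<in> carrier_mat 16 4" and Wh: "mat_adjoint ?W \<in> carrier_mat 4 16"
    by (auto intro: carrier_matI)
  have "measured_state sA sB \<rho> $$ (joint_index x z, joint_index x' z') =
    (\<Sum>k<4. (\<Sum>u<4. ?W $$ (joint_index x z, u) * \<rho> $$ (u,k)) * cnj (?W $$ (joint_index x' z', k)))"
    unfolding measured_state_def Let_def mult3_index[OF W rho Wh i]
    using i by (intro sum.cong refl) (simp add: mat_adjoint_index)
  also have "\<dots> = (\<Sum>k<4. (\<Sum>u<4. ?S x z * cnj (?S u z) * \<rho> $$ (u,k)) * cnj (?S x' z' * cnj (?S k z')))"
    using assms by (intro sum.cong refl) (simp add: kron_meas_iso_index)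
  also have "\<dots> = ?S x z * rho_in_basis sA sB \<rho> z z' * cnj (?S x' z')"
    unfolding rho_in_basis_def sum_distrib_left sum_distrib_right
    by (subst sum.swap) (intro sum.cong refl, simp add: ac_simps)
  finally show ?thesis .
qed

lemma dim_pt_ApBp [simp]: "dim_row (pt_ApBp \<tau>) = 16" "dim_col (pt_ApBp \<tau>) = 16"
  unfolding pt_ApBp_def by simp_all

lemma pt_ApBp_joint_index:
  assumes "x < 4" "y < 4" "x' < 4" "y' < 4"
  shows "pt_ApBp \<tau> $$ (joint_index x y, joint_index x' y') = \<tau> $$ (joint_index x y', joint_index x' y)"
proof -
  note idx = joint_index_props[OF assms(1,2)] joint_index_props[OF assms(3,4)]
  have "pt_ApBp \<tau> $$ (joint_index x y, joint_index x' y') = \<tau> $$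
     (8*(x div 2) + 4*(y' div 2) + 2*(x mod 2) + y' mod 2, 8*(x' div 2) + 4*(y div 2) + 2*(x' mod 2) + y mod 2)"
    unfolding pt_ApBp_def Let_def using idx by (simp only: index_mat prod.case)
  then show ?thesis
    by (simp only: joint_index_def)
qed

text \<open>Partial transposition on \<open>A'B'\<close> swaps the ancilla labels, which are the column labels of
  \<open>rho_in_basis\<close> in the measured state.\<close>

lemma pt_measured_state_index:
  assumes "x < 4" "y < 4" "x' < 4" "y' < 4" and rho: "\<rho> \<in> carrier_mat 4 4"
  shows "pt_ApBp (measured_state sA sB \<rho>) $$ (joint_index x y, joint_index x' y') =
    prod_basis_coord sA sB x y' * rho_in_basis sA sB \<rho> y' y * cnj (prod_basis_coord sA sB x' y)"
  using assms by (simp add: pt_ApBp_joint_index measured_state_index)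

section \<open>The negativity of a measured state\<close>

text \<open>\<open>X\<^sup>\<dagger>X\<close> for the partial transpose \<open>X\<close> of a measured state is diagonalised by the unitary
  \<open>anc_block_unitary\<close>, which acts on the system label only, with eigenvalues
  \<open>\<bar>rho_in_basis y x\<bar>\<^sup>2\<close>.\<close>

definition anc_block_unitary :: "(nat \<Rightarrow> complex vec) \<Rightarrow> (nat \<Rightarrow> complex vec) \<Rightarrow> complex mat" where
  "anc_block_unitary sA sB = mat 16 16 (\<lambda>(i,j).
     if anc_label i = anc_label j then prod_basis_coord sA sB (sys_label i) (sys_label j) else 0)"

definition anc_block_unitary_adj :: "(nat \<Rightarrow> complex vec) \<Rightarrow> (nat \<Rightarrow> complex vec) \<Rightarrow> complex mat" where
  "anc_block_unitary_adj sA sB = mat 16 16 (\<lambda>(i,j).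
     if anc_label i = anc_label j then cnj (prod_basis_coord sA sB (sys_label j) (sys_label i)) else 0)"

definition abs_sq_diag :: "(nat \<Rightarrow> complex vec) \<Rightarrow> (nat \<Rightarrow> complex vec) \<Rightarrow> complex mat \<Rightarrow> complex mat" where
  "abs_sq_diag sA sB \<rho> = mat 16 16 (\<lambda>(i,j).
     if i = j then complex_of_real ((cmod (rho_in_basis sA sB \<rho> (anc_label i) (sys_label i)))\<^sup>2) else 0)"

lemma anc_block_carrier:
  "anc_block_unitary sA sB \<in> carrier_mat 16 16" "anc_block_unitary_adj sA sB \<in> carrier_mat 16 16"
  "abs_sq_diag sA sB \<rho> \<in> carrier_mat 16 16"
  by (auto simp: anc_block_unitary_def anc_block_unitary_adj_def abs_sq_diag_def)

lemma sum_delta_mult_delta: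
  "(y::nat) < 4 \<Longrightarrow> (\<Sum>w<4. (if y = w then a w else 0) * (if w = y' then b w else 0)) =
     (if y = y' then a y * (b y :: complex) else 0)"
proof -
  assume "y < 4"
  have "(\<Sum>w<4. (if y = w then a w else 0) * (if w = y' then b w else 0)) =
    (\<Sum>w<4. if y = w then (if y = y' then a y * b y else 0) else 0)"
    by (intro sum.cong refl) auto
  then show ?thesis
    using \<open>y < 4\<close> by (simp add: sum.delta)
qed

lemma anc_block_unitary_mult_adj:
  assumes A: "onb 2 sA" and B: "onb 2 sB"
  shows "anc_block_unitary sA sB * anc_block_unitary_adj sA sB = 1\<^sub>m 16"
proof (rule eq_matI)
  let ?S = "prod_basis_coord sA sB"
  fix i j assume "i < dim_row (1\<^sub>m 16 :: complex mat)" "j < dim_col (1\<^sub>m 16 :: complex mat)"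
  then obtain x y x' y' where ij: "i = joint_index x y" "j = joint_index x' y'"
    and b: "x < 4" "y < 4" "x' < 4" "y' < 4"
    using joint_index_labels by (metis index_one_mat(2,3))
  have "(anc_block_unitary sA sB * anc_block_unitary_adj sA sB) $$ (i,j) =
    (\<Sum>k<16. anc_block_unitary sA sB $$ (i,k) * anc_block_unitary_adj sA sB $$ (k,j))"
    using b joint_index_props unfolding ij
    by (simp add: anc_block_unitary_def anc_block_unitary_adj_def scalar_prod_def atLeast0LessThan)
  also have "\<dots> = (\<Sum>z<4. \<Sum>w<4. (if y = w then ?S x z else 0) * (if w = y' then cnj (?S x' z) else 0))"
    unfolding sum_lessThan_16 ij using b
    by (intro sum.cong refl) (simp add: anc_block_unitary_def anc_block_unitary_adj_def joint_index_props)
  also have "\<dots> = (if y = y' then (\<Sum>z<4. ?S x z * cnj (?S x' z)) else 0)"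
    using b by (simp add: sum_delta_mult_delta)
  also have "\<dots> = 1\<^sub>m 16 $$ (i,j)"
    using b joint_index_props prod_basis_coord_rows[OF A B, of x x'] unfolding ij
    by (auto simp: joint_index_eq_iff)
  finally show "(anc_block_unitary sA sB * anc_block_unitary_adj sA sB) $$ (i,j) = 1\<^sub>m 16 $$ (i,j)" .
qed (auto simp: anc_block_unitary_def anc_block_unitary_adj_def)

lemma gram_pt_measured_state_index:
  assumes A: "onb 2 sA" and B: "onb 2 sB" and rho: "\<rho> \<in> carrier_mat 4 4"
    and b: "x < 4" "y < 4" "x' < 4" "y' < 4"
  defines "X \<equiv> pt_ApBp (measured_state sA sB \<rho>)"
  shows "(mat_adjoint X * X) $$ (joint_index x y, joint_index x' y') =
    (if y = y' then (\<Sum>z<4. prod_basis_coord sA sB x z * complex_of_real ((cmod (rho_in_basis sA sB \<rho> y z))\<^sup>2)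
       * cnj (prod_basis_coord sA sB x' z)) else 0)"
proof -
  let ?S = "prod_basis_coord sA sB" and ?r = "rho_in_basis sA sB \<rho>"
  define G where "G z = cnj (?r y z) * ?r y' z * ?S x z * cnj (?S x' z)" for z
  have "(mat_adjoint X * X) $$ (joint_index x y, joint_index x' y') =
    (\<Sum>k<16. cnj (X $$ (k, joint_index x y)) * X $$ (k, joint_index x' y'))"
    using b joint_index_props by (simp add: X_def scalar_prod_def atLeast0LessThan mat_adjoint_index)
  also have "\<dots> = (\<Sum>u<4. \<Sum>z<4. cnj (?S u y * ?r y z * cnj (?S x z)) * (?S u y' * ?r y' z * cnj (?S x' z)))"
    unfolding sum_lessThan_16 X_def using b rho by (intro sum.cong refl) (simp add: pt_measured_state_index)
  also have "\<dots> = (\<Sum>z<4. (\<Sum>u<4. cnj (?S u y) * ?S u y') * G z)"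
    unfolding sum_distrib_right G_def by (subst sum.swap) (intro sum.cong refl, simp add: ac_simps)
  also have "\<dots> = (if y = y' then (\<Sum>z<4. ?S x z * complex_of_real ((cmod (?r y z))\<^sup>2) * cnj (?S x' z)) else 0)"
    using b by (simp only: prod_basis_coord_cols[OF A B])
      (auto simp: G_def complex_norm_square[symmetric] ac_simps intro!: sum.cong)
  finally show ?thesis .
qed

lemma anc_block_conj_index:
  assumes b: "x < 4" "y < 4" "x' < 4" "y' < 4"
  shows "(anc_block_unitary sA sB * abs_sq_diag sA sB \<rho> * anc_block_unitary_adj sA sB) $$ (joint_index x y, joint_index x' y') =
    (if y = y' then (\<Sum>z<4. prod_basis_coord sA sB x z * complex_of_real ((cmod (rho_in_basis sA sB \<rho> y z))\<^sup>2)
       * cnj (prod_basis_coord sA sB x' z)) else 0)"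
proof -
  let ?L = "anc_block_unitary sA sB" and ?D = "abs_sq_diag sA sB \<rho>" and ?Lh = "anc_block_unitary_adj sA sB"
  let ?S = "prod_basis_coord sA sB" and ?r = "rho_in_basis sA sB \<rho>"
  have diag: "(\<Sum>u<16. ?L $$ (i,u) * ?D $$ (u,k)) = ?L $$ (i,k) * ?D $$ (k,k)" if "k < 16" for i k
  proof -
    have "(\<Sum>u<16. ?L $$ (i,u) * ?D $$ (u,k)) = (\<Sum>u<16. if u = k then ?L $$ (i,k) * ?D $$ (k,k) else 0)"
      using that by (intro sum.cong refl) (auto simp: abs_sq_diag_def)
    then show ?thesis
      using that by (simp add: sum.delta')
  qed
  have "(?L * ?D * ?Lh) $$ (joint_index x y, joint_index x' y') =
    (\<Sum>k<16. ?L $$ (joint_index x y, k) * ?D $$ (k,k) * ?Lh $$ (k, joint_index x' y'))"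
    using b joint_index_props by (simp add: mult3_index[OF anc_block_carrier(1,3,2)] diag)
  also have "\<dots> = (\<Sum>z<4. \<Sum>w<4. (if y = w then ?S x z * complex_of_real ((cmod (?r w z))\<^sup>2) else 0)
     * (if w = y' then cnj (?S x' z) else 0))"
    unfolding sum_lessThan_16 using b
    by (intro sum.cong refl) (simp add: anc_block_unitary_def anc_block_unitary_adj_def abs_sq_diag_def joint_index_props)
  also have "\<dots> = (if y = y' then (\<Sum>z<4. ?S x z * complex_of_real ((cmod (?r y z))\<^sup>2) * cnj (?S x' z)) else 0)"
    using b by (simp add: sum_delta_mult_delta sum.neutral)
  finally show ?thesis .
qed

lemma gram_pt_measured_state:
  assumes A: "onb 2 sA" and B: "onb 2 sB" and rho: "\<rho> \<in> carrier_mat 4 4"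
  defines "X \<equiv> pt_ApBp (measured_state sA sB \<rho>)"
  shows "mat_adjoint X * X = anc_block_unitary sA sB * abs_sq_diag sA sB \<rho> * anc_block_unitary_adj sA sB"
proof (rule eq_matI)
  fix i j assume "i < dim_row (anc_block_unitary sA sB * abs_sq_diag sA sB \<rho> * anc_block_unitary_adj sA sB)"
    "j < dim_col (anc_block_unitary sA sB * abs_sq_diag sA sB \<rho> * anc_block_unitary_adj sA sB)"
  then have "i < 16" "j < 16"
    by (auto simp: anc_block_unitary_def anc_block_unitary_adj_def)
  then obtain x y x' y' where "i = joint_index x y" "j = joint_index x' y'" "x < 4" "y < 4" "x' < 4" "y' < 4"
    using joint_index_labels by metis
  then show "(mat_adjoint X * X) $$ (i,j) =
    (anc_block_unitary sA sB * abs_sq_diag sA sB \<rho> * anc_block_unitary_adj sA sB) $$ (i,j)"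
    unfolding X_def by (simp only: gram_pt_measured_state_index[OF A B rho] anc_block_conj_index)
qed (auto simp: X_def anc_block_unitary_def anc_block_unitary_adj_def)

lemma proots_prod_linear_factors: "proots (\<Prod>a\<leftarrow>xs. [:- a, 1:]) = mset (xs :: complex list)"
proof (induction xs)
  case (Cons a xs)
  have "proots (\<Prod>a\<leftarrow>a # xs. [:- a, 1:]) = proots [:- a, 1:] + proots (\<Prod>a\<leftarrow>xs. [:- a, 1:])"
    by (simp only: prod_list.Cons list.map, rule proots_mult) (auto simp: prod_list_zero_iff)
  then show ?case
    using Cons by simp
qed simp

lemma trace_norm_pt_measured_state:
  assumes A: "onb 2 sA" and B: "onb 2 sB" and rho: "\<rho> \<in> carrier_mat 4 4"
  shows "trace_norm (pt_ApBp (measured_state sA sB \<rho>)) = (\<Sum>x<4. \<Sum>y<4. cmod (rho_in_basis sA sB \<rho> y x))"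
proof -
  let ?X = "pt_ApBp (measured_state sA sB \<rho>)" and ?D = "abs_sq_diag sA sB \<rho>"
  let ?L = "anc_block_unitary sA sB" and ?Lh = "anc_block_unitary_adj sA sB"
  note carr = anc_block_carrier
  have LLh: "?L * ?Lh = 1\<^sub>m 16"
    by (rule anc_block_unitary_mult_adj[OF A B])
  have "similar_mat (mat_adjoint ?X * ?X) ?D"
    by (rule similar_matI[OF _ LLh mat_mult_left_right_inverse[OF carr(1,2) LLh] gram_pt_measured_state[OF A B rho]])
       (use carr in \<open>auto intro: carrier_matI\<close>)
  moreover have "upper_triangular ?D"
    unfolding upper_triangular_def by (auto simp: abs_sq_diag_def)
  ultimately have cp: "char_poly (mat_adjoint ?X * ?X) = (\<Prod>a\<leftarrow>diag_mat ?D. [:- a, 1:])"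
    by (simp add: char_poly_similar char_poly_upper_triangular[OF carr(3)])
  have "trace_norm ?X = sum_list (map (\<lambda>x. sqrt (Re x)) (diag_mat ?D))"
    unfolding trace_norm_def cp proots_prod_linear_factors by (metis mset_map sum_mset_sum_list)
  also have "\<dots> = (\<Sum>i<16. cmod (rho_in_basis sA sB \<rho> (anc_label i) (sys_label i)))"
    by (simp add: diag_mat_def sum_list_sum_nth atLeast0LessThan abs_sq_diag_def)
  also have "\<dots> = (\<Sum>x<4. \<Sum>y<4. cmod (rho_in_basis sA sB \<rho> y x))"
    unfolding sum_lessThan_16 by (intro sum.cong refl) (simp add: joint_index_props)
  finally show ?thesis .
qed

lemma negativity_measured_state:
  assumes "onb 2 sA" "onb 2 sB" "\<rho> \<in> carrier_mat 4 4"
  shows "negativity_AB_ApBp (measured_state sA sB \<rho>) = ((\<Sum>x<4. \<Sum>y<4. cmod (rho_in_basis sA sB \<rho> y x)) - 1) / 2"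
  unfolding negativity_AB_ApBp_def trace_norm_pt_measured_state[OF assms] ..

section \<open>The lower bound for Bell diagonal states\<close>

lemma median3_cases:
  fixes a b c :: real
  defines "m \<equiv> sort [a, b, c] ! 1"
  shows "(m = a \<and> (b - m) * (c - m) \<le> 0) \<or> (m = b \<and> (a - m) * (c - m) \<le> 0) \<or> (m = c \<and> (a - m) * (b - m) \<le> 0)"
  unfolding m_def
  by (cases "a \<le> b"; cases "b \<le> c"; cases "a \<le> c") (auto simp: mult_le_0_iff)

lemma opposite_sign_squares:
  fixes a m b :: real
  assumes "(\<bar>a\<bar> - \<bar>m\<bar>) * (\<bar>b\<bar> - \<bar>m\<bar>) \<le> 0"
  shows "(a\<^sup>2 - m\<^sup>2) * (b\<^sup>2 - m\<^sup>2) \<le> 0"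
proof -
  have "(a\<^sup>2 - m\<^sup>2) * (b\<^sup>2 - m\<^sup>2) = ((\<bar>a\<bar> - \<bar>m\<bar>) * (\<bar>b\<bar> - \<bar>m\<bar>)) * ((\<bar>a\<bar> + \<bar>m\<bar>) * (\<bar>b\<bar> + \<bar>m\<bar>))"
    by (simp add: algebra_simps power2_eq_square[symmetric])
  also have "\<dots> \<le> 0"
    using assms by (simp add: mult_nonpos_nonneg)
  finally show ?thesis .
qed

lemma opposite_weights_bound:
  fixes u v :: complex and \<alpha> \<beta> :: real
  assumes "\<alpha> * \<beta> \<le> 0"
  shows "0 \<le> \<alpha> * (cmod u)\<^sup>2 + \<beta> * (cmod v)\<^sup>2 + cmod (of_real \<alpha> * u\<^sup>2 + of_real \<beta> * v\<^sup>2)"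
proof -
  let ?N = "cmod (of_real \<alpha> * u\<^sup>2 + of_real \<beta> * v\<^sup>2)"
  have u: "cmod (of_real \<alpha> * u\<^sup>2) = \<bar>\<alpha>\<bar> * (cmod u)\<^sup>2" and v: "cmod (of_real \<beta> * v\<^sup>2) = \<bar>\<beta>\<bar> * (cmod v)\<^sup>2"
    by (simp_all add: norm_mult norm_power)
  have ge1: "\<bar>\<beta>\<bar> * (cmod v)\<^sup>2 - \<bar>\<alpha>\<bar> * (cmod u)\<^sup>2 \<le> ?N"
    using norm_diff_ineq[of "of_real \<beta> * v\<^sup>2" "of_real \<alpha> * u\<^sup>2"] unfolding u v by (simp add: add.commute)
  have ge2: "\<bar>\<alpha>\<bar> * (cmod u)\<^sup>2 - \<bar>\<beta>\<bar> * (cmod v)\<^sup>2 \<le> ?N"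
    using norm_diff_ineq[of "of_real \<alpha> * u\<^sup>2" "of_real \<beta> * v\<^sup>2"] unfolding u v .
  consider "0 \<le> \<alpha>" "\<beta> \<le> 0" | "\<alpha> \<le> 0" "0 \<le> \<beta>"
    using assms by (auto simp: mult_le_0_iff)
  then show ?thesis
  proof cases
    case 1
    then show ?thesis
      using ge1 by (simp add: abs_of_nonpos)
  next
    case 2
    then show ?thesis
      using ge2 by (simp add: abs_of_nonpos)
  qed
qed

text \<open>Using \<open>\<Sum> W\<^sub>k\<^sup>2 = 0\<close> and \<open>\<Sum> \<bar>W\<^sub>k\<bar>\<^sup>2 = 2\<close>, the left-hand side equals \<open>2 d\<close> plus an
  instance of \<open>opposite_weights_bound\<close> with weights \<open>d\<^sub>a - d\<close> and \<open>d\<^sub>b - d\<close>.\<close>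

lemma isotropic_weighted_bound:
  fixes Wa Wb W :: complex and da db d :: real
  assumes norm: "(cmod Wa)\<^sup>2 + (cmod Wb)\<^sup>2 + (cmod W)\<^sup>2 = 2" and iso: "Wa\<^sup>2 + Wb\<^sup>2 + W\<^sup>2 = 0"
    and between: "(da - d) * (db - d) \<le> 0"
  shows "2 * d \<le> da * (cmod Wa)\<^sup>2 + db * (cmod Wb)\<^sup>2 + d * (cmod W)\<^sup>2
     + cmod (of_real da * Wa\<^sup>2 + of_real db * Wb\<^sup>2 + of_real d * W\<^sup>2)"
proof -
  have "of_real da * Wa\<^sup>2 + of_real db * Wb\<^sup>2 + of_real d * W\<^sup>2
      = of_real (da - d) * Wa\<^sup>2 + of_real (db - d) * Wb\<^sup>2 + of_real d * (Wa\<^sup>2 + Wb\<^sup>2 + W\<^sup>2)"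
    by (simp add: algebra_simps)
  then have "of_real da * Wa\<^sup>2 + of_real db * Wb\<^sup>2 + of_real d * W\<^sup>2 = of_real (da - d) * Wa\<^sup>2 + of_real (db - d) * Wb\<^sup>2"
    using iso by simp
  moreover have "da * (cmod Wa)\<^sup>2 + db * (cmod Wb)\<^sup>2 + d * (cmod W)\<^sup>2 = 2 * d + (da - d) * (cmod Wa)\<^sup>2 + (db - d) * (cmod Wb)\<^sup>2"
    using norm by (simp add: algebra_simps flip: norm)
  ultimately show ?thesis
    using opposite_weights_bound[OF between, of Wa Wb] by simp
qed

lemma isotropic_median_bound:
  fixes W1 W2 W3 :: complex and c1 c2 c3 :: real
  assumes norm: "(cmod W1)\<^sup>2 + (cmod W2)\<^sup>2 + (cmod W3)\<^sup>2 = 2" and iso: "W1\<^sup>2 + W2\<^sup>2 + W3\<^sup>2 = 0"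
  defines "d1 \<equiv> c1\<^sup>2" and "d2 \<equiv> c2\<^sup>2" and "d3 \<equiv> c3\<^sup>2"
  shows "2 * (sort [\<bar>c1\<bar>, \<bar>c2\<bar>, \<bar>c3\<bar>] ! 1)\<^sup>2 \<le> d1 * (cmod W1)\<^sup>2 + d2 * (cmod W2)\<^sup>2 + d3 * (cmod W3)\<^sup>2
     + cmod (of_real d1 * W1\<^sup>2 + of_real d2 * W2\<^sup>2 + of_real d3 * W3\<^sup>2)"
  using median3_cases[of "\<bar>c1\<bar>" "\<bar>c2\<bar>" "\<bar>c3\<bar>"]
proof (elim disjE conjE)
  let ?m = "sort [\<bar>c1\<bar>, \<bar>c2\<bar>, \<bar>c3\<bar>] ! 1"
  assume "?m = \<bar>c1\<bar>" "(\<bar>c2\<bar> - ?m) * (\<bar>c3\<bar> - ?m) \<le> 0"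
  then have "2 * d1 \<le> d2 * (cmod W2)\<^sup>2 + d3 * (cmod W3)\<^sup>2 + d1 * (cmod W1)\<^sup>2
     + cmod (of_real d2 * W2\<^sup>2 + of_real d3 * W3\<^sup>2 + of_real d1 * W1\<^sup>2)"
    using norm iso opposite_sign_squares[of c2 c1 c3] unfolding d1_def d2_def d3_def
    by (intro isotropic_weighted_bound) (simp_all add: ac_simps)
  then show ?thesis
    using \<open>?m = \<bar>c1\<bar>\<close> by (simp add: d1_def ac_simps)
next
  let ?m = "sort [\<bar>c1\<bar>, \<bar>c2\<bar>, \<bar>c3\<bar>] ! 1"
  assume "?m = \<bar>c2\<bar>" "(\<bar>c1\<bar> - ?m) * (\<bar>c3\<bar> - ?m) \<le> 0"
  then have "2 * d2 \<le> d1 * (cmod W1)\<^sup>2 + d3 * (cmod W3)\<^sup>2 + d2 * (cmod W2)\<^sup>2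
     + cmod (of_real d1 * W1\<^sup>2 + of_real d3 * W3\<^sup>2 + of_real d2 * W2\<^sup>2)"
    using norm iso opposite_sign_squares[of c1 c2 c3] unfolding d1_def d2_def d3_def
    by (intro isotropic_weighted_bound) (simp_all add: ac_simps)
  then show ?thesis
    using \<open>?m = \<bar>c2\<bar>\<close> by (simp add: d2_def ac_simps)
next
  let ?m = "sort [\<bar>c1\<bar>, \<bar>c2\<bar>, \<bar>c3\<bar>] ! 1"
  assume "?m = \<bar>c3\<bar>" "(\<bar>c1\<bar> - ?m) * (\<bar>c2\<bar> - ?m) \<le> 0"
  then have "2 * d3 \<le> d1 * (cmod W1)\<^sup>2 + d2 * (cmod W2)\<^sup>2 + d3 * (cmod W3)\<^sup>2
     + cmod (of_real d1 * W1\<^sup>2 + of_real d2 * W2\<^sup>2 + of_real d3 * W3\<^sup>2)"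
    using norm iso opposite_sign_squares[of c1 c3 c2] unfolding d1_def d2_def d3_def
    by (intro isotropic_weighted_bound) simp_all
  then show ?thesis
    using \<open>?m = \<bar>c3\<bar>\<close> by (simp add: d3_def)
qed

text \<open>Up to sign, the \<open>W\<^sub>k = \<langle>g|\<sigma>\<^sub>k|h\<rangle>\<close> are the Pauli coefficients of the traceless
  rank-one operator \<open>|h\<rangle>\<langle>g|\<close>; its Hilbert-Schmidt norm \<open>1\<close> and determinant \<open>0\<close> give the two
  identities.\<close>

lemma pauli_coeffs_orthonormal_pair:
  fixes g0 g1 h0 h1 :: complex
  assumes ng: "cnj g0 * g0 + cnj g1 * g1 = 1" and nh: "cnj h0 * h0 + cnj h1 * h1 = 1"
    and o: "cnj g0 * h0 + cnj g1 * h1 = 0"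
  defines "W1 \<equiv> cnj g0 * h1 + cnj g1 * h0" and "W2 \<equiv> \<i> * (cnj g0 * h1 - cnj g1 * h0)"
    and "W3 \<equiv> 2 * (cnj g0 * h0)"
  shows "(cmod W1)\<^sup>2 + (cmod W2)\<^sup>2 + (cmod W3)\<^sup>2 = 2" and "W1\<^sup>2 + W2\<^sup>2 + W3\<^sup>2 = 0"
proof -
  define u v where "u = cnj g0 * h0" and "v = cnj g1 * h1"
  have "complex_of_real ((cmod W1)\<^sup>2 + (cmod W2)\<^sup>2 + (cmod W3)\<^sup>2) = W1 * cnj W1 + W2 * cnj W2 + W3 * cnj W3"
    by (simp only: of_real_add complex_norm_square)
  also have "\<dots> = 2 * (cnj g0 * g0 + cnj g1 * g1) * (cnj h0 * h0 + cnj h1 * h1)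
     + 2 * ((u + v) * cnj (u + v) - (u + v) * cnj v - v * cnj (u + v))"
    unfolding W1_def W2_def W3_def u_def v_def by (simp add: algebra_simps)
  also have "\<dots> = 2"
    using ng nh o unfolding u_def v_def by simp
  finally show "(cmod W1)\<^sup>2 + (cmod W2)\<^sup>2 + (cmod W3)\<^sup>2 = 2"
    by (metis of_real_numeral of_real_eq_iff)
  have "W1\<^sup>2 + W2\<^sup>2 + W3\<^sup>2 = 4 * u * (u + v)"
    unfolding W1_def W2_def W3_def u_def v_def by (simp add: algebra_simps power2_eq_square)
  then show "W1\<^sup>2 + W2\<^sup>2 + W3\<^sup>2 = 0"
    using o unfolding u_def v_def by simp
qed

definition det2 :: "(nat \<Rightarrow> nat \<Rightarrow> complex) \<Rightarrow> complex" where
  "det2 X = X 0 0 * X 1 1 - X 0 1 * X 1 0"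

text \<open>The hypotheses on \<open>K\<close> describe the block \<open>\<langle>g|\<rho>|h\<rangle>\<close> over \<open>B\<close> of a Bell diagonal state
  with correlations \<open>c\<^sub>1, c\<^sub>2, c\<^sub>3\<close>; its Frobenius norm and determinant are the two halves of
  \<open>isotropic_median_bound\<close>.\<close>

lemma bell_block_bound:
  fixes g0 g1 h0 h1 :: complex and c1 c2 c3 :: real and K :: "nat \<Rightarrow> nat \<Rightarrow> complex"
  assumes ng: "cnj g0 * g0 + cnj g1 * g1 = 1" and nh: "cnj h0 * h0 + cnj h1 * h1 = 1"
    and o: "cnj g0 * h0 + cnj g1 * h1 = 0"
    and K: "K 0 0 = of_real (c3/2) * (cnj g0 * h0)" "K 1 1 = - of_real (c3/2) * (cnj g0 * h0)"
      "K 0 1 = of_real ((c1 - c2)/4) * (cnj g0 * h1) + of_real ((c1 + c2)/4) * (cnj g1 * h0)"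
      "K 1 0 = of_real ((c1 + c2)/4) * (cnj g0 * h1) + of_real ((c1 - c2)/4) * (cnj g1 * h0)"
  shows "(sort [\<bar>c1\<bar>, \<bar>c2\<bar>, \<bar>c3\<bar>] ! 1)\<^sup>2 / 4 \<le>
    (cmod (K 0 0))\<^sup>2 + (cmod (K 0 1))\<^sup>2 + (cmod (K 1 0))\<^sup>2 + (cmod (K 1 1))\<^sup>2 + 2 * cmod (det2 K)"
proof -
  define W1 W2 W3 where "W1 = cnj g0 * h1 + cnj g1 * h0" and "W2 = \<i> * (cnj g0 * h1 - cnj g1 * h0)"
    and "W3 = 2 * (cnj g0 * h0)"
  define d1 d2 d3 where "d1 = c1\<^sup>2" and "d2 = c2\<^sup>2" and "d3 = c3\<^sup>2"
  let ?Q = "d1 * (cmod W1)\<^sup>2 + d2 * (cmod W2)\<^sup>2 + d3 * (cmod W3)\<^sup>2"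
  let ?R = "of_real d1 * W1\<^sup>2 + of_real d2 * W2\<^sup>2 + of_real d3 * W3\<^sup>2"
  have frobenius: "(cmod (K 0 0))\<^sup>2 + (cmod (K 0 1))\<^sup>2 + (cmod (K 1 0))\<^sup>2 + (cmod (K 1 1))\<^sup>2 = ?Q / 8"
  proof -
    have "complex_of_real (8 * ((cmod (K 0 0))\<^sup>2 + (cmod (K 0 1))\<^sup>2 + (cmod (K 1 0))\<^sup>2 + (cmod (K 1 1))\<^sup>2)) =
       complex_of_real ?Q"
      unfolding of_real_add of_real_mult complex_norm_square
      unfolding K W1_def W2_def W3_def d1_def d2_def d3_def
      by (simp add: algebra_simps power2_eq_square) (simp add: field_simps)
    then show ?thesis
      by (simp only: of_real_eq_iff) simp
  qed
  have det: "det2 K = - ?R / 16"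
    unfolding det2_def K W1_def W2_def W3_def d1_def d2_def d3_def
    by (simp add: algebra_simps power2_eq_square) (simp add: field_simps)
  have "2 * (sort [\<bar>c1\<bar>, \<bar>c2\<bar>, \<bar>c3\<bar>] ! 1)\<^sup>2 \<le> ?Q + cmod ?R"
    unfolding d1_def d2_def d3_def W1_def W2_def W3_def
    by (rule isotropic_median_bound[OF pauli_coeffs_orthonormal_pair[OF ng nh o]])
  then show ?thesis
    unfolding frobenius det norm_divide norm_minus_cancel by (simp add: field_simps)
qed

lemma det2_mult: "det2 (\<lambda>i j. \<Sum>k<2. X i k * Y k j) = det2 X * det2 Y"
  unfolding det2_def sum_lessThan_2 by (simp add: algebra_simps)

lemma sum_cmod_sq_mult_unitary2:
  fixes M :: "nat \<Rightarrow> nat \<Rightarrow> complex"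
  assumes M: "\<And>r s. r < 2 \<Longrightarrow> s < 2 \<Longrightarrow> (\<Sum>a<2. M r a * cnj (M s a)) = (if r = s then 1 else 0)"
  shows "(\<Sum>a<2. (cmod (\<Sum>r<2. c r * M r a))\<^sup>2) = (\<Sum>r<2. (cmod (c r))\<^sup>2)"
proof -
  have "complex_of_real (\<Sum>a<2. (cmod (\<Sum>r<2. c r * M r a))\<^sup>2) =
     (\<Sum>a<2. (\<Sum>r<2. c r * M r a) * cnj (\<Sum>r<2. c r * M r a))"
    by (simp only: of_real_sum complex_norm_square)
  also have "\<dots> = c 0 * cnj (c 0) * (\<Sum>a<2. M 0 a * cnj (M 0 a)) + c 0 * cnj (c 1) * (\<Sum>a<2. M 0 a * cnj (M 1 a))
     + c 1 * cnj (c 0) * (\<Sum>a<2. M 1 a * cnj (M 0 a)) + c 1 * cnj (c 1) * (\<Sum>a<2. M 1 a * cnj (M 1 a))"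
    unfolding sum_lessThan_2 by (simp add: algebra_simps)
  also have "\<dots> = c 0 * cnj (c 0) + c 1 * cnj (c 1)"
    using M[of 0 0] M[of 0 1] M[of 1 0] M[of 1 1] by simp
  also have "\<dots> = complex_of_real (\<Sum>r<2. (cmod (c r))\<^sup>2)"
    by (simp only: sum_lessThan_2 of_real_add complex_norm_square)
  finally show ?thesis
    by (simp only: of_real_eq_iff)
qed

lemma unitary_conj2_invariants:
  fixes A K :: "nat \<Rightarrow> nat \<Rightarrow> complex"
  assumes row: "\<And>r s. r < 2 \<Longrightarrow> s < 2 \<Longrightarrow> (\<Sum>a<2. A r a * cnj (A s a)) = (if r = s then 1 else 0)"
    and col: "\<And>a b. a < 2 \<Longrightarrow> b < 2 \<Longrightarrow> (\<Sum>r<2. cnj (A r a) * A r b) = (if a = b then 1 else 0)"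
  defines "K' \<equiv> \<lambda>a a'. \<Sum>r<2. \<Sum>r'<2. cnj (A r a) * K r r' * A r' a'"
  shows "(\<Sum>a<2. \<Sum>a'<2. (cmod (K' a a'))\<^sup>2) = (\<Sum>r<2. \<Sum>r'<2. (cmod (K r r'))\<^sup>2)"
    and "cmod (det2 K') = cmod (det2 K)"
proof -
  define N where "N = (\<lambda>r a'. \<Sum>r'<2. K r r' * A r' a')"
  define Ah where "Ah = (\<lambda>a r. cnj (A r a))"
  have K'N: "K' = (\<lambda>a a'. \<Sum>r<2. Ah a r * N r a')"
    unfolding K'_def N_def Ah_def by (simp add: sum_distrib_left ac_simps)
  have row_cnj: "(\<Sum>a<2. Ah a r * cnj (Ah a s)) = (if r = s then 1 else 0)" if "r < 2" "s < 2" for r s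
  proof -
    have "(\<Sum>a<2. Ah a r * cnj (Ah a s)) = cnj (\<Sum>a<2. A r a * cnj (A s a))"
      unfolding Ah_def by (simp add: ac_simps)
    then show ?thesis
      using row[OF that] by simp
  qed
  have "(\<Sum>a<2. \<Sum>a'<2. (cmod (K' a a'))\<^sup>2) = (\<Sum>a'<2. \<Sum>a<2. (cmod (\<Sum>r<2. N r a' * Ah a r))\<^sup>2)"
    unfolding K'N by (subst sum.swap) (simp add: ac_simps)
  also have "\<dots> = (\<Sum>a'<2. \<Sum>r<2. (cmod (N r a'))\<^sup>2)"
    by (intro sum.cong refl sum_cmod_sq_mult_unitary2[where M="\<lambda>r a. Ah a r"] row_cnj)
  also have "\<dots> = (\<Sum>r<2. \<Sum>a'<2. (cmod (\<Sum>r'<2. K r r' * A r' a'))\<^sup>2)"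
    unfolding N_def by (rule sum.swap)
  also have "\<dots> = (\<Sum>r<2. \<Sum>r'<2. (cmod (K r r'))\<^sup>2)"
    by (intro sum.cong refl sum_cmod_sq_mult_unitary2 row)
  finally show "(\<Sum>a<2. \<Sum>a'<2. (cmod (K' a a'))\<^sup>2) = (\<Sum>r<2. \<Sum>r'<2. (cmod (K r r'))\<^sup>2)" .
  have "det2 Ah * det2 A = det2 (\<lambda>i j. \<Sum>k<2. cnj (A k i) * A k j)"
    unfolding Ah_def by (simp add: det2_mult)
  also have "\<dots> = 1"
    unfolding det2_def using col[of 0 0] col[of 1 1] col[of 0 1] col[of 1 0] by simp
  finally have "det2 Ah * det2 A = 1" .
  moreover have "det2 K' = det2 Ah * (det2 K * det2 A)"
    unfolding K'N N_def by (simp add: det2_mult)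
  ultimately have "det2 K' = det2 K"
    by (metis mult.left_commute mult.right_neutral)
  then show "cmod (det2 K') = cmod (det2 K)"
    by simp
qed

lemma square_sum_cmod_ge:
  fixes k00 k01 k10 k11 :: complex
  shows "(cmod k00)\<^sup>2 + (cmod k01)\<^sup>2 + (cmod k10)\<^sup>2 + (cmod k11)\<^sup>2 + 2 * cmod (k00 * k11 - k01 * k10)
    \<le> (cmod k00 + cmod k01 + cmod k10 + cmod k11)\<^sup>2"
proof -
  have "cmod (k00 * k11 - k01 * k10) \<le> cmod k00 * cmod k11 + cmod k01 * cmod k10"
    by (metis norm_mult norm_triangle_ineq4)
  moreover have "0 \<le> cmod k00 * cmod k01" "0 \<le> cmod k00 * cmod k10" "0 \<le> cmod k01 * cmod k11"
    "0 \<le> cmod k10 * cmod k11"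
    by simp_all
  moreover have "(cmod k00 + cmod k01 + cmod k10 + cmod k11)\<^sup>2 =
     (cmod k00)\<^sup>2 + (cmod k01)\<^sup>2 + (cmod k10)\<^sup>2 + (cmod k11)\<^sup>2 + 2 * (cmod k00 * cmod k11) + 2 * (cmod k01 * cmod k10)
     + 2 * (cmod k00 * cmod k01) + 2 * (cmod k00 * cmod k10) + 2 * (cmod k01 * cmod k11) + 2 * (cmod k10 * cmod k11)"
    by (simp add: power2_eq_square algebra_simps)
  ultimately show ?thesis
    by linarith
qed

text \<open>\<open>partial_elem_B sB b b' \<rho>\<close> is the operator \<open>\<langle>sB b|\<rho>|sB b'\<rangle>\<close> on \<open>A\<close>, written in the
  computational basis of \<open>A\<close>.\<close>

definition partial_elem_B :: "(nat \<Rightarrow> complex vec) \<Rightarrow> nat \<Rightarrow> nat \<Rightarrow> complex mat \<Rightarrow> nat \<Rightarrow> nat \<Rightarrow> complex" where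
  "partial_elem_B sB b b' \<rho> r r' = (\<Sum>j<2. \<Sum>j'<2. cnj (sB b $ j) * \<rho> $$ (2*r+j, 2*r'+j') * sB b' $ j')"

lemma rho_in_basis_eq_partial_elem_B:
  assumes "b < 2" "b' < 2"
  shows "rho_in_basis sA sB \<rho> (2*a+b) (2*a'+b') =
    (\<Sum>r<2. \<Sum>r'<2. cnj (sA a $ r) * partial_elem_B sB b b' \<rho> r r' * sA a' $ r')"
proof -
  have d: "(2*a+b) div 2 = a" "(2*a+b) mod 2 = b" "(2*a'+b') div 2 = a'" "(2*a'+b') mod 2 = b'"
    using assms by auto
  show ?thesis
    unfolding rho_in_basis_def partial_elem_B_def prod_basis_coord_def d
    by (simp only: sum_lessThan_4 sum_lessThan_2) (simp, simp add: numeral_eq_Suc algebra_simps)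
qed

lemma partial_elem_B_bell_diag:
  fixes p :: "nat \<Rightarrow> real"
  assumes B: "onb 2 sB" and b: "b < 2" "b' < 2" "b \<noteq> b'"
  defines "g0 \<equiv> sB b $ 0" and "g1 \<equiv> sB b $ 1" and "h0 \<equiv> sB b' $ 0" and "h1 \<equiv> sB b' $ 1"
  defines "c1 \<equiv> p 0 + p 1 - p 2 - p 3" and "c2 \<equiv> - p 0 + p 1 - p 2 + p 3" and "c3 \<equiv> p 0 - p 1 - p 2 + p 3"
  shows "partial_elem_B sB b b' (bell_diag p) 0 0 = of_real (c3/2) * (cnj g0 * h0)"
    "partial_elem_B sB b b' (bell_diag p) 1 1 = - of_real (c3/2) * (cnj g0 * h0)"
    "partial_elem_B sB b b' (bell_diag p) 0 1 = of_real ((c1 - c2)/4) * (cnj g0 * h1) + of_real ((c1 + c2)/4) * (cnj g1 * h0)"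
    "partial_elem_B sB b b' (bell_diag p) 1 0 = of_real ((c1 + c2)/4) * (cnj g0 * h1) + of_real ((c1 - c2)/4) * (cnj g1 * h0)"
proof -
  have "cnj g0 * h0 + cnj g1 * h1 = 0"
    using onb_inner_cnj[OF B b(1,2)] b(3) unfolding g0_def g1_def h0_def h1_def by (simp add: sum_lessThan_2)
  then have v: "cnj g1 * h1 = - (cnj g0 * h0)"
    by (simp add: eq_neg_iff_add_eq_0 add.commute)
  note entries = partial_elem_B_def sum_lessThan_2 bell_diag_index bell_diag_entry_def
  have "partial_elem_B sB b b' (bell_diag p) 0 0 =
    of_real ((p 0 + p 3)/2) * (cnj g0 * h0) + of_real ((p 1 + p 2)/2) * (cnj g1 * h1)"
    unfolding g0_def g1_def h0_def h1_def by (simp add: entries ac_simps)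
  also have "\<dots> = of_real (c3/2) * (cnj g0 * h0)"
    unfolding v c3_def by (simp add: field_simps)
  finally show "partial_elem_B sB b b' (bell_diag p) 0 0 = of_real (c3/2) * (cnj g0 * h0)" .
  have "partial_elem_B sB b b' (bell_diag p) 1 1 =
    of_real ((p 1 + p 2)/2) * (cnj g0 * h0) + of_real ((p 0 + p 3)/2) * (cnj g1 * h1)"
    unfolding g0_def g1_def h0_def h1_def by (simp add: entries ac_simps)
  also have "\<dots> = - of_real (c3/2) * (cnj g0 * h0)"
    unfolding v c3_def by (simp add: field_simps)
  finally show "partial_elem_B sB b b' (bell_diag p) 1 1 = - of_real (c3/2) * (cnj g0 * h0)" .
  show "partial_elem_B sB b b' (bell_diag p) 0 1 = of_real ((c1 - c2)/4) * (cnj g0 * h1) + of_real ((c1 + c2)/4) * (cnj g1 * h0)"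
    "partial_elem_B sB b b' (bell_diag p) 1 0 = of_real ((c1 + c2)/4) * (cnj g0 * h1) + of_real ((c1 - c2)/4) * (cnj g1 * h0)"
    unfolding g0_def g1_def h0_def h1_def c1_def c2_def
    by (simp_all add: entries field_simps)
qed

text \<open>The block with \<open>B\<close>-labels \<open>b \<noteq> b'\<close> is the conjugate of \<open>partial_elem_B\<close> by the unitary
  with columns \<open>sA\<close>.\<close>

lemma off_diagonal_block_bound:
  fixes p :: "nat \<Rightarrow> real"
  assumes A: "onb 2 sA" and B: "onb 2 sB" and b: "b < 2" "b' < 2" "b \<noteq> b'"
  defines "c1 \<equiv> p 0 + p 1 - p 2 - p 3" and "c2 \<equiv> - p 0 + p 1 - p 2 + p 3" and "c3 \<equiv> p 0 - p 1 - p 2 + p 3"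
  shows "sort [\<bar>c1\<bar>, \<bar>c2\<bar>, \<bar>c3\<bar>] ! 1 / 2 \<le>
    (\<Sum>a<2. \<Sum>a'<2. cmod (rho_in_basis sA sB (bell_diag p) (2*a+b) (2*a'+b')))"
proof -
  define m where "m = sort [\<bar>c1\<bar>, \<bar>c2\<bar>, \<bar>c3\<bar>] ! 1"
  define K where "K = partial_elem_B sB b b' (bell_diag p)"
  define K' where "K' = (\<lambda>a a'. \<Sum>r<2. \<Sum>r'<2. cnj (sA a $ r) * K r r' * sA a' $ r')"
  have "cnj (sB b $ 0) * sB b $ 0 + cnj (sB b $ 1) * sB b $ 1 = 1"
    "cnj (sB b' $ 0) * sB b' $ 0 + cnj (sB b' $ 1) * sB b' $ 1 = 1"
    "cnj (sB b $ 0) * sB b' $ 0 + cnj (sB b $ 1) * sB b' $ 1 = 0"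
    using onb_inner_cnj[OF B] b by (simp_all add: sum_lessThan_2)
  from bell_block_bound[OF this partial_elem_B_bell_diag[OF B b]]
  have K_bound: "m\<^sup>2 / 4 \<le> (cmod (K 0 0))\<^sup>2 + (cmod (K 0 1))\<^sup>2 + (cmod (K 1 0))\<^sup>2 + (cmod (K 1 1))\<^sup>2 + 2 * cmod (det2 K)"
    unfolding m_def c1_def c2_def c3_def K_def .
  have frobenius: "(\<Sum>a<2. \<Sum>a'<2. (cmod (K' a a'))\<^sup>2) = (\<Sum>r<2. \<Sum>r'<2. (cmod (K r r'))\<^sup>2)"
    and det: "cmod (det2 K') = cmod (det2 K)"
    unfolding K'_def using onb_rows_orthonormal[OF A] onb_inner_cnj[OF A]
    by (intro unitary_conj2_invariants; simp)+
  define S where "S = (\<Sum>a<2. \<Sum>a'<2. cmod (rho_in_basis sA sB (bell_diag p) (2*a+b) (2*a'+b')))"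
  have S: "S = cmod (K' 0 0) + cmod (K' 0 1) + cmod (K' 1 0) + cmod (K' 1 1)"
    unfolding S_def rho_in_basis_eq_partial_elem_B[OF b(1,2)] K'_def K_def by (simp add: sum_lessThan_2 add.assoc)
  have "(m/2)\<^sup>2 \<le> (cmod (K' 0 0))\<^sup>2 + (cmod (K' 0 1))\<^sup>2 + (cmod (K' 1 0))\<^sup>2 + (cmod (K' 1 1))\<^sup>2 + 2 * cmod (det2 K')"
    using K_bound frobenius det by (simp add: sum_lessThan_2 power_divide add.assoc)
  also have "\<dots> \<le> S\<^sup>2"
    unfolding S det2_def by (rule square_sum_cmod_ge)
  finally have "m/2 \<le> S"
    by (rule power2_le_imp_le) (simp add: S_def sum_nonneg)
  then show ?thesis
    unfolding S_def m_def .
qed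

lemma trace_rho_in_basis:
  assumes A: "onb 2 sA" and B: "onb 2 sB"
  shows "(\<Sum>x<4. rho_in_basis sA sB \<rho> x x) = (\<Sum>u<4. \<rho> $$ (u,u))"
proof -
  let ?S = "prod_basis_coord sA sB"
  have "(\<Sum>x<4. rho_in_basis sA sB \<rho> x x) = (\<Sum>u<4. \<Sum>v<4. \<rho> $$ (u,v) * (\<Sum>x<4. ?S v x * cnj (?S u x)))"
    unfolding rho_in_basis_def sum_distrib_left
    by (subst sum.swap, rule sum.cong[OF refl], subst sum.swap) (simp add: ac_simps)
  also have "\<dots> = (\<Sum>u<4. \<Sum>v<4. if v = u then \<rho> $$ (u,v) else 0)"
    by (intro sum.cong refl) (simp add: prod_basis_coord_rows[OF A B])
  also have "\<dots> = (\<Sum>u<4. \<rho> $$ (u,u))"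
    by (simp add: sum.delta')
  finally show ?thesis .
qed

lemma sum_cmod_rho_in_basis_bell_diag_ge:
  fixes p :: "nat \<Rightarrow> real"
  assumes A: "onb 2 sA" and B: "onb 2 sB" and p: "(\<Sum>i<4. p i) = 1"
  defines "c1 \<equiv> p 0 + p 1 - p 2 - p 3" and "c2 \<equiv> - p 0 + p 1 - p 2 + p 3" and "c3 \<equiv> p 0 - p 1 - p 2 + p 3"
  shows "1 + sort [\<bar>c1\<bar>, \<bar>c2\<bar>, \<bar>c3\<bar>] ! 1 \<le> (\<Sum>x<4. \<Sum>y<4. cmod (rho_in_basis sA sB (bell_diag p) y x))"
proof -
  define f where "f i j = cmod (rho_in_basis sA sB (bell_diag p) i j)" for i j
  define m where "m = sort [\<bar>c1\<bar>, \<bar>c2\<bar>, \<bar>c3\<bar>] ! 1"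
  have "(\<Sum>x<4. rho_in_basis sA sB (bell_diag p) x x) = complex_of_real (\<Sum>i<4. p i)"
    by (simp add: trace_rho_in_basis[OF A B] sum_lessThan_4 bell_diag_index bell_diag_entry_def field_simps)
  then have "1 = cmod (\<Sum>x<4. rho_in_basis sA sB (bell_diag p) x x)"
    using p by simp
  also have "\<dots> \<le> f 0 0 + f 1 1 + f 2 2 + f 3 3"
    using norm_sum[of "\<lambda>x. rho_in_basis sA sB (bell_diag p) x x" "{..<4}"] by (simp add: sum_lessThan_4 f_def)
  finally have diagonal: "1 \<le> f 0 0 + f 1 1 + f 2 2 + f 3 3" .
  have block01: "m/2 \<le> f 0 1 + f 0 3 + f 2 1 + f 2 3"
    using off_diagonal_block_bound[OF A B, of 0 1 p] unfolding m_def c1_def c2_def c3_def f_def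
    by (simp add: sum_lessThan_2 add.assoc)
  have block10: "m/2 \<le> f 1 0 + f 1 2 + f 3 0 + f 3 2"
    using off_diagonal_block_bound[OF A B, of 1 0 p] unfolding m_def c1_def c2_def c3_def f_def
    by (simp add: sum_lessThan_2 add.assoc)
  have "0 \<le> f 0 2" "0 \<le> f 2 0" "0 \<le> f 1 3" "0 \<le> f 3 1"
    by (simp_all add: f_def)
  then show ?thesis
    using diagonal block01 block10 unfolding m_def[symmetric] f_def[symmetric] sum_lessThan_4 by linarith
qed

section \<open>Optimal measurements\<close>

text \<open>Measuring both qubits in the eigenbasis of \<open>\<sigma>\<^sub>k\<close>
  permutes the Bell weights so that \<open>\<rho>\<close> keeps its X shape in the product basis.\<close>

definition x_basis :: "nat \<Rightarrow> complex vec" where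
  "x_basis k = vec 2 (\<lambda>i. if i = 0 \<or> k = 0 then complex_of_real inv_sqrt2 else - complex_of_real inv_sqrt2)"

definition y_basis :: "nat \<Rightarrow> complex vec" where
  "y_basis k = vec 2 (\<lambda>i. if i = 0 then complex_of_real inv_sqrt2
     else if k = 0 then \<i> * complex_of_real inv_sqrt2 else - \<i> * complex_of_real inv_sqrt2)"

definition z_basis :: "nat \<Rightarrow> complex vec" where
  "z_basis k = vec 2 (\<lambda>i. if i = k then 1 else 0)"

lemma x_basis_index:
  "x_basis 0 $ 0 = complex_of_real inv_sqrt2" "x_basis 0 $ 1 = complex_of_real inv_sqrt2"
  "x_basis 1 $ 0 = complex_of_real inv_sqrt2" "x_basis 1 $ 1 = - complex_of_real inv_sqrt2"
  by (simp_all add: x_basis_def)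

lemma y_basis_index:
  "y_basis 0 $ 0 = complex_of_real inv_sqrt2" "y_basis 0 $ 1 = \<i> * complex_of_real inv_sqrt2"
  "y_basis 1 $ 0 = complex_of_real inv_sqrt2" "y_basis 1 $ 1 = - \<i> * complex_of_real inv_sqrt2"
  by (simp_all add: y_basis_def)

lemma z_basis_index: "z_basis 0 $ 0 = 1" "z_basis 0 $ 1 = 0" "z_basis 1 $ 0 = 0" "z_basis 1 $ 1 = 1"
  by (simp_all add: z_basis_def)

lemma onb2I:
  assumes carrier: "\<And>k. s k \<in> carrier_vec 2"
    and inner: "\<And>j k. j < 2 \<Longrightarrow> k < 2 \<Longrightarrow> s j $ 0 * cnj (s k $ 0) + s j $ 1 * cnj (s k $ 1) = (if j = k then 1 else 0)"
  shows "onb 2 s"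
proof -
  have "s j \<bullet>c s k = s j $ 0 * cnj (s k $ 0) + s j $ 1 * cnj (s k $ 1)" for j k
    using carrier[of k] by (simp add: scalar_prod_def sum_lessThan_2 atLeast0LessThan)
  then show ?thesis
    unfolding onb_def using carrier inner by simp
qed

lemma onb_x_basis: "onb 2 x_basis"
  by (rule onb2I) (auto simp: x_basis_def nat_less_2_iff inv_sqrt2_sq)

lemma onb_y_basis: "onb 2 y_basis"
  by (rule onb2I) (auto simp: y_basis_def nat_less_2_iff inv_sqrt2_sq inv_sqrt2_sq_mult algebra_simps)

lemma onb_z_basis: "onb 2 z_basis"
  by (rule onb2I) (auto simp: z_basis_def nat_less_2_iff)

lemma rho_in_x_basis_bell_diag:
  "x < 4 \<Longrightarrow> y < 4 \<Longrightarrow> rho_in_basis x_basis x_basis (bell_diag p) x y =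
     complex_of_real (bell_diag_entry (\<lambda>i. [p 0, p 3, p 2, p 1] ! i) x y)"
  unfolding nat_less_4_iff
  by (elim disjE; simp add: rho_in_basis_def prod_basis_coord_def sum_lessThan_4 bell_diag_index bell_diag_entry_def
      x_basis_index x_basis_index[unfolded One_nat_def] inv_sqrt2_sq inv_sqrt2_sq_mult algebra_simps)
    (simp_all add: field_simps)

lemma rho_in_y_basis_bell_diag:
  "x < 4 \<Longrightarrow> y < 4 \<Longrightarrow> rho_in_basis y_basis y_basis (bell_diag p) x y =
     complex_of_real (bell_diag_entry (\<lambda>i. [p 3, p 0, p 2, p 1] ! i) x y)"
  unfolding nat_less_4_iff
  by (elim disjE; simp add: rho_in_basis_def prod_basis_coord_def sum_lessThan_4 bell_diag_index bell_diag_entry_def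
      y_basis_index y_basis_index[unfolded One_nat_def] inv_sqrt2_sq inv_sqrt2_sq_mult algebra_simps)
    (simp_all add: field_simps)

lemma rho_in_z_basis_bell_diag:
  "x < 4 \<Longrightarrow> y < 4 \<Longrightarrow> rho_in_basis z_basis z_basis (bell_diag p) x y = complex_of_real (bell_diag_entry p x y)"
  unfolding nat_less_4_iff
  by (elim disjE) (simp_all add: rho_in_basis_def prod_basis_coord_def sum_lessThan_4 bell_diag_index
      bell_diag_entry_def z_basis_index z_basis_index[unfolded One_nat_def])

lemma all_nat_less_4: "(\<forall>i<4. P i) \<longleftrightarrow> P 0 \<and> P 1 \<and> P 2 \<and> P (3::nat)"
  by (auto simp: nat_less_4_iff)

lemma negativity_measured_bell_diag:
  fixes p q :: "nat \<Rightarrow> real"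
  assumes s: "onb 2 s"
    and entries: "\<And>x y. x < 4 \<Longrightarrow> y < 4 \<Longrightarrow> rho_in_basis s s (bell_diag p) x y = complex_of_real (bell_diag_entry q x y)"
    and q: "\<forall>i<4. 0 \<le> q i" "q 0 + q 1 + q 2 + q 3 = 1"
  shows "negativity_AB_ApBp (measured_state s s (bell_diag p)) = (\<bar>q 0 - q 3\<bar> + \<bar>q 1 - q 2\<bar>) / 2"
proof -
  have "(\<Sum>x<4. \<Sum>y<4. cmod (rho_in_basis s s (bell_diag p) y x)) = (\<Sum>x<4. \<Sum>y<4. \<bar>bell_diag_entry q y x\<bar>)"
    by (intro sum.cong refl) (simp add: entries)
  also have "\<dots> = 1 + \<bar>q 0 - q 3\<bar> + \<bar>q 1 - q 2\<bar>"
    using q by (simp add: all_nat_less_4 sum_lessThan_4 bell_diag_entry_def abs_divide)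
  finally show ?thesis
    by (simp add: negativity_measured_state[OF s s bell_diag_carrier])
qed

lemma abs_add_abs_eq_max:
  fixes x y a b :: real
  assumes "x + y = a" "y - x = b"
  shows "\<bar>x\<bar> + \<bar>y\<bar> = max \<bar>a\<bar> \<bar>b\<bar>"
  unfolding assms[symmetric] by (simp add: abs_if max_def)

text \<open>The three measurements give \<open>max \<bar>c\<^sub>i\<bar> \<bar>c\<^sub>j\<bar> / 2\<close> for the three pairs \<open>i \<noteq> j\<close>; one of
  these maxima is the median.\<close>

lemma median3_eq_max_pair: "sort [a, b, c] ! 1 \<in> {max a b, max c b, max c a}" for a b c :: real
  by (cases "a \<le> b"; cases "b \<le> c"; cases "a \<le> c") (auto simp: max_def)

lemma bell_diag_negativity_attained:
  fixes p :: "nat \<Rightarrow> real"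
  assumes nonneg: "\<forall>i<4. p i \<ge> 0" and sum: "(\<Sum>i<4. p i) = 1"
  defines "c1 \<equiv> p 0 + p 1 - p 2 - p 3" and "c2 \<equiv> - p 0 + p 1 - p 2 + p 3" and "c3 \<equiv> p 0 - p 1 - p 2 + p 3"
  shows "\<exists>s. onb 2 s \<and> negativity_AB_ApBp (measured_state s s (bell_diag p)) = sort [\<bar>c1\<bar>, \<bar>c2\<bar>, \<bar>c3\<bar>] ! 1 / 2"
proof -
  have p: "0 \<le> p 0" "0 \<le> p 1" "0 \<le> p 2" "0 \<le> p 3" "p 0 + p 1 + p 2 + p 3 = 1"
    using nonneg sum by (auto simp: all_nat_less_4 sum_lessThan_4)
  have "negativity_AB_ApBp (measured_state z_basis z_basis (bell_diag p)) = (\<bar>p 0 - p 3\<bar> + \<bar>p 1 - p 2\<bar>) / 2"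
    using negativity_measured_bell_diag[OF onb_z_basis rho_in_z_basis_bell_diag] p by (simp add: all_nat_less_4)
  also have "\<bar>p 0 - p 3\<bar> + \<bar>p 1 - p 2\<bar> = max \<bar>c1\<bar> \<bar>c2\<bar>"
    by (rule abs_add_abs_eq_max) (simp_all add: c1_def c2_def)
  finally have z: "negativity_AB_ApBp (measured_state z_basis z_basis (bell_diag p)) = max \<bar>c1\<bar> \<bar>c2\<bar> / 2" .
  have "negativity_AB_ApBp (measured_state x_basis x_basis (bell_diag p)) = (\<bar>p 0 - p 1\<bar> + \<bar>p 3 - p 2\<bar>) / 2"
    using negativity_measured_bell_diag[OF onb_x_basis rho_in_x_basis_bell_diag] p by (simp add: all_nat_less_4)
  also have "\<bar>p 0 - p 1\<bar> + \<bar>p 3 - p 2\<bar> = max \<bar>c3\<bar> \<bar>c2\<bar>"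
    by (rule abs_add_abs_eq_max) (simp_all add: c2_def c3_def)
  finally have x: "negativity_AB_ApBp (measured_state x_basis x_basis (bell_diag p)) = max \<bar>c3\<bar> \<bar>c2\<bar> / 2" .
  have "negativity_AB_ApBp (measured_state y_basis y_basis (bell_diag p)) = (\<bar>p 3 - p 1\<bar> + \<bar>p 0 - p 2\<bar>) / 2"
    using negativity_measured_bell_diag[OF onb_y_basis rho_in_y_basis_bell_diag] p by (simp add: all_nat_less_4)
  also have "\<bar>p 3 - p 1\<bar> + \<bar>p 0 - p 2\<bar> = max \<bar>c3\<bar> \<bar>c1\<bar>"
    by (rule abs_add_abs_eq_max) (simp_all add: c1_def c3_def)
  finally have y: "negativity_AB_ApBp (measured_state y_basis y_basis (bell_diag p)) = max \<bar>c3\<bar> \<bar>c1\<bar> / 2" .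
  show ?thesis
    using median3_eq_max_pair[of "\<bar>c1\<bar>" "\<bar>c2\<bar>" "\<bar>c3\<bar>"] x y z onb_x_basis onb_y_basis onb_z_basis
    by (elim insertE emptyE) metis+
qed

lemma QN_AB_eqI:
  assumes lower: "\<And>sA sB. onb 2 sA \<Longrightarrow> onb 2 sB \<Longrightarrow> v \<le> negativity_AB_ApBp (measured_state sA sB \<rho>)"
    and attained: "onb 2 sA" "onb 2 sB" "negativity_AB_ApBp (measured_state sA sB \<rho>) = v"
  shows "QN_AB \<rho> = v"
  unfolding QN_AB_def by (rule cInf_eq_minimum) (use lower attained in auto)

theorem corollary3:
  fixes p :: "nat \<Rightarrow> real"
  assumes "\<forall>i<4. p i \<ge> 0" and "(\<Sum>i<4. p i) = 1"
  defines "lam2 \<equiv> sort [cmod (corr (bell_diag p) 1 1), cmod (corr (bell_diag p) 2 2),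
                        cmod (corr (bell_diag p) 3 3)] ! 1"
  shows "QN_AB (bell_diag p) = lam2 / 2 \<and>
         (\<exists>sA sB. onb 2 sA \<and> onb 2 sB \<and>
            negativity_AB_ApBp (measured_state sA sB (bell_diag p)) = lam2 / 2)"
proof -
  have lam2: "lam2 = sort [\<bar>p 0 + p 1 - p 2 - p 3\<bar>, \<bar>- p 0 + p 1 - p 2 + p 3\<bar>, \<bar>p 0 - p 1 - p 2 + p 3\<bar>] ! 1"
    unfolding lam2_def corr_bell_diag norm_of_real ..
  have lower: "lam2 / 2 \<le> negativity_AB_ApBp (measured_state sA sB (bell_diag p))" if "onb 2 sA" "onb 2 sB" for sA sB
    using sum_cmod_rho_in_basis_bell_diag_ge[OF that assms(2)]
    unfolding negativity_measured_state[OF that bell_diag_carrier] lam2 by simp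
  obtain s where "onb 2 s" "negativity_AB_ApBp (measured_state s s (bell_diag p)) = lam2 / 2"
    using bell_diag_negativity_attained[OF assms(1,2)] unfolding lam2 by blast
  then show ?thesis
    using QN_AB_eqI[OF lower] by blast
qed

end
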